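(* Consider the stochastic processes $\{x^k\}_k$, $\{z^k\}_k$ generated by the normal map-based stochastic proximal gradient method described in the context, and suppose that conditions (A.2), (A.3) and (A.4) hold. Let $\{n_k\}_k\subseteq\mathbb{N}$ be an arbitrary strictly increasing sequence of indices and define \[ r_k:=\max_{n_k<j\le n_{k+1}}\Big\|\sum_{i=n_k}^{j-1}\alpha_i e^i\Big\|. \] Then $\sum_{k=0}^\infty \beta_{n_k}^2 r_k^2<\infty$ almost surely, where $\{\beta_k\}_k$ is the sequence from (A.4).
   Context: Let $\varphi:\mathbb{R}^d\to(-\infty,\infty]$ be convex, lower semicontinuous and proper, let $f:\mathbb{R}^d\to\mathbb{R}$ be continuously differentiable on an open set containing $\mathrm{dom}\,\varphi=\{x:\varphi(x)<\infty\}$, and set $\psi=f+\varphi$. For $\lambda>0$ let $\mathrm{prox}_{\lambda\varphi}(x)=\operatorname{argmin}_y\{\varphi(y)+\frac{1}{2\lambda}\|x-y\|^2\}$ and let $\mathrm{env}_{\lambda\varphi}(x)=\min_y\{\varphi(y)+\frac1{2\lambda}\|x-y\|^2\}$ be the Moreau envelope, with $\nabla\mathrm{env}_{\lambda\varphi}(x)=(x-\mathrm{prox}_{\lambda\varphi}(x))/\lambda$. Method: Let $(\Omega,\mathcal F,\{\mathcal F_k\}_k,\mathbb P)$ be a filtered probability space, $\lambda>0$, step sizes $\{\alpha_k\}_k\subset(0,\infty)$, a deterministic $z^0\in\mathbb{R}^d$ and $x^0=\mathrm{prox}_{\lambda\varphi}(z^0)$. For $k=0,1,2,\dots$ let $g^k:\Omega\to\mathbb{R}^d$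 be an $\mathcal F_{k+1}$-measurable random vector (a stochastic estimate of $\nabla f(x^k)$), and set $z^{k+1}=z^k-\alpha_k(g^k+\nabla\mathrm{env}_{\lambda\varphi}(z^k))$, $x^{k+1}=\mathrm{prox}_{\lambda\varphi}(z^{k+1})$. Thus $x^k,z^k$ are $\mathcal F_k$-measurable. Define the errors $e^k:=g^k-\nabla f(x^k)$. Conditions: (A.2) $\mathbb E[g^k\mid\mathcal F_k]=\nabla f(x^k)$ a.s. and there is $\{\sigma_k\}_k\subseteq\mathbb R_+$ with $\mathbb E[\|e^k\|^2]\le\sigma_k^2$ for all $k$. (A.3) $\sum_k\alpha_k=\infty$ and $\alpha_k\to0$. (A.4) There is a sequence $\{\beta_k\}_k\subseteq(0,\infty)$ which is non-decreasing for all $k$ sufficiently large such that $\sum_{k=0}^\infty\alpha_k^2\beta_k^2\sigma_k^2<\infty$. *)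

theory Defs
  imports "HOL-Analysis.Analysis" "HOL-Probability.Probability"
begin

definition edom :: "('d \<Rightarrow> ereal) \<Rightarrow> 'd set" where
  "edom \<phi> = {x. \<phi> x < \<infinity>}"

definition proper_fun :: "('d \<Rightarrow> ereal) \<Rightarrow> bool" where
  "proper_fun \<phi> \<longleftrightarrow> (\<forall>x. \<phi> x \<noteq> -\<infinity>) \<and> edom \<phi> \<noteq> {}"

definition econvex :: "('d::real_vector \<Rightarrow> ereal) \<Rightarrow> bool" where
  "econvex \<phi> \<longleftrightarrow> (\<forall>x y t. 0 \<le> t \<and> t \<le> 1 \<longrightarrow>
      \<phi> ((1 - t) *\<^sub>R x + t *\<^sub>R y) \<le> ereal (1 - t) * \<phi> x + ereal t * \<phi> y)"

definition elsc :: "('d::topological_space \<Rightarrow> ereal) \<Rightarrow> bool" where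
  "elsc \<phi> \<longleftrightarrow> (\<forall>x. \<phi> x \<le> Liminf (at x) \<phi>)"

text \<open>Proximal operator (the unique minimiser, under the standing assumptions).\<close>
definition prox :: "real \<Rightarrow> ('d::real_normed_vector \<Rightarrow> ereal) \<Rightarrow> 'd \<Rightarrow> 'd" where
  "prox lam \<phi> x = (SOME y. \<forall>w. \<phi> y + ereal (norm (x - y)^2 / (2 * lam))
                              \<le> \<phi> w + ereal (norm (x - w)^2 / (2 * lam)))"

definition grad_env :: "real \<Rightarrow> ('d::real_normed_vector \<Rightarrow> ereal) \<Rightarrow> 'd \<Rightarrow> 'd" where
  "grad_env lam \<phi> x = (1 / lam) *\<^sub>R (x - prox lam \<phi> x)"

end

theory Submission
  imports Defs
begin

text \<open>
  The centred noise terms \<open>d i = \<alpha> i *\<^sub>R e i\<close> form a martingale difference sequence in \<open>L\<^sup>2\<close>: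
  \<open>d i\<close> is \<open>F (Suc i)\<close>-measurable and orthogonal to every square-integrable \<open>F i\<close>-measurable
  function. For such sequences Doob's \<open>L\<^sup>2\<close> maximal inequality has an elementary proof. If \<open>S j\<close>
  are the partial sums and \<open>R j\<close> the running maximum of their norms, then
  \<open>(R (j+1))\<^sup>2 \<le> (R j)\<^sup>2 + 2 |S (j+1)| (R (j+1) - R j)\<close>, and orthogonality allows \<open>S (j+1)\<close> to be
  replaced by \<open>S N\<close> in expectation; hence \<open>E (R N)\<^sup>2 \<le> 2 E (|S N| R N) \<le> E (R N)\<^sup>2 / 2 + 2 E |S N|\<^sup>2\<close>,
  i.e. \<open>E (R N)\<^sup>2 \<le> 4 E |S N|\<^sup>2 = 4 \<Sum> E |d i|\<^sup>2\<close>.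

  On the block \<open>(n k, n (k+1)]\<close>, and using \<open>\<beta> (n k) \<le> \<beta> i\<close> there for large \<open>k\<close>, this bounds
  \<open>E (\<beta> (n k)\<^sup>2 r k\<^sup>2)\<close> by four times the sum of \<open>\<alpha> i\<^sup>2 \<beta> i\<^sup>2 \<sigma> i\<^sup>2\<close> over the block. These bounds
  are summable by (A.4), so \<open>\<Sum> \<beta> (n k)\<^sup>2 r k\<^sup>2\<close> has finite expectation and is finite almost surely.
\<close>

lemma integrable_mult_of_square_integrable:
  fixes f g :: "'a \<Rightarrow> real"
  assumes "f \<in> borel_measurable M" "g \<in> borel_measurable M"
    and "integrable M (\<lambda>x. (f x)\<^sup>2)" "integrable M (\<lambda>x. (g x)\<^sup>2)"
  shows "integrable M (\<lambda>x. f x * g x)"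
proof (rule Bochner_Integration.integrable_bound)
  show "integrable M (\<lambda>x. ((f x)\<^sup>2 + (g x)\<^sup>2) / 2)"
    using assms by simp
  have "\<bar>f x * g x\<bar> \<le> ((f x)\<^sup>2 + (g x)\<^sup>2) / 2" for x
  proof -
    have "0 \<le> (\<bar>f x\<bar> - \<bar>g x\<bar>)\<^sup>2" by simp
    then show ?thesis by (simp add: abs_mult power2_eq_square algebra_simps)
  qed
  then show "AE x in M. norm (f x * g x) \<le> norm (((f x)\<^sup>2 + (g x)\<^sup>2) / 2)"
    by simp
qed (use assms in simp)

lemma integrable_inner_of_square_integrable:
  fixes X Y :: "'a \<Rightarrow> 'b::euclidean_space"
  assumes [measurable]: "X \<in> borel_measurable M" "Y \<in> borel_measurable M"
    and "integrable M (\<lambda>x. (norm (X x))\<^sup>2)" "integrable M (\<lambda>x. (norm (Y x))\<^sup>2)"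
  shows "integrable M (\<lambda>x. X x \<bullet> Y x)"
proof (rule Bochner_Integration.integrable_bound)
  show "integrable M (\<lambda>x. norm (X x) * norm (Y x))"
    by (rule integrable_mult_of_square_integrable) (use assms in simp_all)
qed (simp_all add: Cauchy_Schwarz_ineq2)

lemma max_square_le: "(max m s)\<^sup>2 \<le> m\<^sup>2 + 2 * s * (max m s - m)" for m s :: real
proof (cases "s \<le> m")
  case False
  have "0 \<le> (s - m)\<^sup>2" by simp
  with False show ?thesis by (simp add: max_def power2_eq_square algebra_simps)
qed (simp add: max_def)

lemma nn_integral_le_imp_integrable:
  fixes f :: "'a \<Rightarrow> real"
  assumes [measurable]: "f \<in> borel_measurable M" and "\<And>x. 0 \<le> f x"
    and "(\<integral>\<^sup>+x. ennreal (f x) \<partial>M) \<le> ennreal c"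
  shows "integrable M f"
  by (rule integrableI_nonneg) (use assms in \<open>auto intro: le_less_trans\<close>)

lemma nn_integral_le_imp_integral_le:
  fixes f :: "'a \<Rightarrow> real"
  assumes [measurable]: "f \<in> borel_measurable M" and "\<And>x. 0 \<le> f x"
    and "(\<integral>\<^sup>+x. ennreal (f x) \<partial>M) \<le> ennreal c" and "0 \<le> c"
  shows "(\<integral>x. f x \<partial>M) \<le> c"
proof -
  have "integrable M f" by (rule nn_integral_le_imp_integrable) fact+
  then have "ennreal (\<integral>x. f x \<partial>M) \<le> ennreal c"
    using assms(2,3) by (simp add: nn_integral_eq_integral)
  then show ?thesis using \<open>0 \<le> c\<close> by (simp add: ennreal_le_iff)
qed

lemma AE_summable_of_summable_integral:
  fixes D :: "nat \<Rightarrow> 'a \<Rightarrow> real"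
  assumes int: "\<And>k. integrable M (D k)" and nonneg: "\<And>k x. 0 \<le> D k x"
    and summable: "summable (\<lambda>k. \<integral>x. D k x \<partial>M)"
  shows "AE x in M. summable (\<lambda>k. D k x)"
proof -
  have [measurable]: "D k \<in> borel_measurable M" for k using int by blast
  have "(\<integral>\<^sup>+x. (\<Sum>k. ennreal (D k x)) \<partial>M) = (\<Sum>k. \<integral>\<^sup>+x. ennreal (D k x) \<partial>M)"
    by (rule nn_integral_suminf) simp
  also have "\<dots> = (\<Sum>k. ennreal (\<integral>x. D k x \<partial>M))"
    using int nonneg by (simp add: nn_integral_eq_integral)
  also have "\<dots> = ennreal (\<Sum>k. \<integral>x. D k x \<partial>M)"
    using summable nonneg by (intro suminf_ennreal2) (simp_all add: integral_nonneg)
  finally have "(\<integral>\<^sup>+x. (\<Sum>k. ennreal (D k x)) \<partial>M) \<noteq> \<infinity>"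
    by simp
  then have "AE x in M. (\<Sum>k. ennreal (D k x)) \<noteq> \<infinity>"
    by (intro nn_integral_PInf_AE) simp_all
  then show ?thesis
    by eventually_elim (use nonneg in \<open>auto intro: summable_suminf_not_top\<close>)
qed

lemma summable_sum_blocks:
  fixes c :: "nat \<Rightarrow> real"
  assumes "summable c" and nonneg: "\<And>i. 0 \<le> c i" and "strict_mono n"
  shows "summable (\<lambda>k. \<Sum>i\<in>{n k..<n (Suc k)}. c i)"
proof (rule summableI_nonneg_bounded)
  fix m
  have "(\<Sum>k<m. \<Sum>i\<in>{n k..<n (Suc k)}. c i) = (\<Sum>i\<in>{n 0..<n m}. c i)"
  proof (induction m)
    case (Suc m)
    have "n 0 \<le> n m" "n m \<le> n (Suc m)"
      using \<open>strict_mono n\<close> by (simp_all add: strict_mono_less_eq)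
    with Suc show ?case by (simp add: sum.atLeastLessThan_concat)
  qed simp
  also have "\<dots> \<le> (\<Sum>i<n m. c i)"
    by (rule sum_mono2) (use nonneg in auto)
  also have "\<dots> \<le> suminf c"
    by (rule sum_le_suminf) (use assms in auto)
  finally show "(\<Sum>k<m. \<Sum>i\<in>{n k..<n (Suc k)}. c i) \<le> suminf c" .
qed (use nonneg in \<open>simp add: sum_nonneg\<close>)

lemma (in filtration) measurable_F_mono: "f \<in> measurable (F i) N \<Longrightarrow> i \<le> j \<Longrightarrow> f \<in> measurable (F j) N"
  using measurable_mono[OF order_refl refl sets_F_mono] by (auto simp: space_F)

locale orthogonal_increments = filtration "space M" F
  for M :: "'w measure" and F :: "nat \<Rightarrow> 'w measure" +
  fixes d :: "nat \<Rightarrow> 'w \<Rightarrow> 'd::euclidean_space"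
  assumes subalgebra_F: "\<And>i. subalgebra M (F i)"
    and adapted: "\<And>i. d i \<in> borel_measurable (F (Suc i))"
    and square_integrable: "\<And>i. integrable M (\<lambda>\<omega>. (norm (d i \<omega>))\<^sup>2)"
    and orthogonal: "\<And>i Y. Y \<in> borel_measurable (F i) \<Longrightarrow> integrable M (\<lambda>\<omega>. (norm (Y \<omega>))\<^sup>2) \<Longrightarrow>
      (\<integral>\<omega>. d i \<omega> \<bullet> Y \<omega> \<partial>M) = 0"
begin

lemma measurable_F_imp_M: "f \<in> measurable (F i) N \<Longrightarrow> f \<in> measurable M N"
  by (rule measurable_from_subalg[OF subalgebra_F])

lemma borel_measurable_d [measurable]: "d i \<in> borel_measurable M"
  by (rule measurable_F_imp_M[OF adapted])

definition partial_sum :: "nat \<Rightarrow> 'w \<Rightarrow> 'd" where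
  "partial_sum j \<omega> = (\<Sum>i<j. d i \<omega>)"

definition running_max :: "nat \<Rightarrow> 'w \<Rightarrow> real" where
  "running_max j \<omega> = Max ((\<lambda>l. norm (partial_sum l \<omega>)) ` {..j})"

lemma partial_sum_0 [simp]: "partial_sum 0 \<omega> = 0"
  and partial_sum_Suc: "partial_sum (Suc j) \<omega> = partial_sum j \<omega> + d j \<omega>"
  by (simp_all add: partial_sum_def)

lemma running_max_0 [simp]: "running_max 0 \<omega> = 0"
  by (simp add: running_max_def)

lemma running_max_Suc: "running_max (Suc j) \<omega> = max (running_max j \<omega>) (norm (partial_sum (Suc j) \<omega>))"
  unfolding running_max_def atMost_Suc image_insert
  by (subst Max_insert) (auto simp: max.commute)

lemma running_max_nonneg: "0 \<le> running_max j \<omega>"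
  by (induction j) (simp_all add: running_max_Suc le_max_iff_disj)

lemma partial_sum_measurable_F: "partial_sum j \<in> borel_measurable (F j)"
proof (induction j)
  case (Suc j)
  then have "partial_sum j \<in> borel_measurable (F (Suc j))"
    by (rule measurable_F_mono) simp
  with adapted[of j] show ?case
    unfolding partial_sum_Suc[abs_def] by measurable
qed simp

lemma running_max_measurable_F: "running_max j \<in> borel_measurable (F j)"
proof (induction j)
  case (Suc j)
  then have "running_max j \<in> borel_measurable (F (Suc j))"
    by (rule measurable_F_mono) simp
  with partial_sum_measurable_F[of "Suc j"] show ?case
    unfolding running_max_Suc[abs_def] by measurable
qed simp

lemma borel_measurable_partial_sum [measurable]: "partial_sum j \<in> borel_measurable M"
  and borel_measurable_running_max [measurable]: "running_max j \<in> borel_measurable M"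
  by (rule measurable_F_imp_M, rule partial_sum_measurable_F running_max_measurable_F)+

lemma norm_partial_sum_Suc_square:
  "(norm (partial_sum (Suc j) \<omega>))\<^sup>2 = (norm (partial_sum j \<omega>))\<^sup>2 + 2 * (d j \<omega> \<bullet> partial_sum j \<omega>) + (norm (d j \<omega>))\<^sup>2"
  unfolding partial_sum_Suc power2_norm_eq_inner
  by (simp add: inner_add inner_commute algebra_simps)

lemma integrable_partial_sum_square: "integrable M (\<lambda>\<omega>. (norm (partial_sum j \<omega>))\<^sup>2)"
proof (induction j)
  case (Suc j)
  then have "integrable M (\<lambda>\<omega>. d j \<omega> \<bullet> partial_sum j \<omega>)"
    using square_integrable by (intro integrable_inner_of_square_integrable) simp_all
  with Suc show ?case
    unfolding norm_partial_sum_Suc_square using square_integrable by simp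
qed simp

lemma integral_partial_sum_square:
  "(\<integral>\<omega>. (norm (partial_sum j \<omega>))\<^sup>2 \<partial>M) = (\<Sum>i<j. \<integral>\<omega>. (norm (d i \<omega>))\<^sup>2 \<partial>M)"
proof (induction j)
  case (Suc j)
  have "integrable M (\<lambda>\<omega>. d j \<omega> \<bullet> partial_sum j \<omega>)"
    using square_integrable integrable_partial_sum_square
    by (intro integrable_inner_of_square_integrable) simp_all
  moreover have "(\<integral>\<omega>. d j \<omega> \<bullet> partial_sum j \<omega> \<partial>M) = 0"
    by (rule orthogonal[OF partial_sum_measurable_F integrable_partial_sum_square])
  ultimately show ?case
    unfolding norm_partial_sum_Suc_square
    using Suc integrable_partial_sum_square square_integrable by simp
qed simp

lemma integrable_running_max_square: "integrable M (\<lambda>\<omega>. (running_max j \<omega>)\<^sup>2)"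
proof (rule Bochner_Integration.integrable_bound)
  show "integrable M (\<lambda>\<omega>. \<Sum>l\<le>j. (norm (partial_sum l \<omega>))\<^sup>2)"
    using integrable_partial_sum_square by simp
  have "(running_max j \<omega>)\<^sup>2 \<le> (\<Sum>l\<le>j. (norm (partial_sum l \<omega>))\<^sup>2)" for \<omega>
  proof (induction j)
    case (Suc j)
    have "(running_max (Suc j) \<omega>)\<^sup>2 \<le> (running_max j \<omega>)\<^sup>2 + (norm (partial_sum (Suc j) \<omega>))\<^sup>2"
      unfolding running_max_Suc using running_max_nonneg[of j \<omega>] by (auto simp: max_def)
    with Suc show ?case by simp
  qed simp
  then show "AE \<omega> in M. norm ((running_max j \<omega>)\<^sup>2) \<le> norm (\<Sum>l\<le>j. (norm (partial_sum l \<omega>))\<^sup>2)"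
    by (simp add: sum_nonneg)
qed simp

lemma integral_inner_partial_sum_eq:
  assumes Y: "Y \<in> borel_measurable (F u)" "integrable M (\<lambda>\<omega>. (norm (Y \<omega>))\<^sup>2)" and "u \<le> m"
  shows "(\<integral>\<omega>. partial_sum m \<omega> \<bullet> Y \<omega> \<partial>M) = (\<integral>\<omega>. partial_sum u \<omega> \<bullet> Y \<omega> \<partial>M)"
  using \<open>u \<le> m\<close>
proof (induction m rule: dec_induct)
  case (step m)
  have [measurable]: "Y \<in> borel_measurable M" by (rule measurable_F_imp_M[OF Y(1)])
  have "integrable M (\<lambda>\<omega>. partial_sum m \<omega> \<bullet> Y \<omega>)" "integrable M (\<lambda>\<omega>. d m \<omega> \<bullet> Y \<omega>)"
    using Y(2) integrable_partial_sum_square square_integrable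
    by (auto intro!: integrable_inner_of_square_integrable)
  moreover have "(\<integral>\<omega>. d m \<omega> \<bullet> Y \<omega> \<partial>M) = 0"
    using step(1) by (intro orthogonal measurable_F_mono[OF Y(1)] Y(2))
  ultimately show ?case
    using step by (simp add: partial_sum_Suc inner_add_left)
qed simp

text \<open>Orthogonality, tested against \<open>Z *\<^sub>R sgn (partial_sum u)\<close>, makes \<open>norm \<circ> partial_sum\<close> a
  submartingale.\<close>

lemma integral_norm_partial_sum_mult_le:
  assumes Z_F: "Z \<in> borel_measurable (F u)" and Z_L2: "integrable M (\<lambda>\<omega>. (Z \<omega>)\<^sup>2)"
    and Z_nonneg: "\<And>\<omega>. 0 \<le> Z \<omega>" and "u \<le> N"
  shows "(\<integral>\<omega>. norm (partial_sum u \<omega>) * Z \<omega> \<partial>M) \<le> (\<integral>\<omega>. norm (partial_sum N \<omega>) * Z \<omega> \<partial>M)"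
proof -
  define Y where "Y \<omega> = Z \<omega> *\<^sub>R sgn (partial_sum u \<omega>)" for \<omega>
  have [measurable]: "Z \<in> borel_measurable M" by (rule measurable_F_imp_M[OF Z_F])
  have Y_F: "Y \<in> borel_measurable (F u)"
    using Z_F partial_sum_measurable_F[of u] unfolding Y_def by measurable
  then have [measurable]: "Y \<in> borel_measurable M" by (rule measurable_F_imp_M)
  have norm_Y_le: "norm (Y \<omega>) \<le> Z \<omega>" for \<omega>
    using Z_nonneg[of \<omega>] by (simp add: Y_def norm_sgn)
  have Y_L2: "integrable M (\<lambda>\<omega>. (norm (Y \<omega>))\<^sup>2)"
  proof (rule Bochner_Integration.integrable_bound[OF Z_L2])
    show "AE \<omega> in M. norm ((norm (Y \<omega>))\<^sup>2) \<le> norm ((Z \<omega>)\<^sup>2)"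
      by (intro AE_I2) (simp add: power_mono norm_Y_le)
  qed simp
  have inner_Y: "partial_sum u \<omega> \<bullet> Y \<omega> = norm (partial_sum u \<omega>) * Z \<omega>" for \<omega>
    by (cases "partial_sum u \<omega> = 0")
       (simp_all add: Y_def sgn_div_norm power2_norm_eq_inner[symmetric] power2_eq_square)
  have "(\<integral>\<omega>. norm (partial_sum u \<omega>) * Z \<omega> \<partial>M) = (\<integral>\<omega>. partial_sum u \<omega> \<bullet> Y \<omega> \<partial>M)"
    by (simp add: inner_Y)
  also have "\<dots> = (\<integral>\<omega>. partial_sum N \<omega> \<bullet> Y \<omega> \<partial>M)"
    by (rule integral_inner_partial_sum_eq[OF Y_F Y_L2 \<open>u \<le> N\<close>, symmetric])
  also have "\<dots> \<le> (\<integral>\<omega>. norm (partial_sum N \<omega>) * Z \<omega> \<partial>M)"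
  proof (rule integral_mono)
    show "integrable M (\<lambda>\<omega>. partial_sum N \<omega> \<bullet> Y \<omega>)"
      using Y_L2 integrable_partial_sum_square by (intro integrable_inner_of_square_integrable) simp_all
    show "integrable M (\<lambda>\<omega>. norm (partial_sum N \<omega>) * Z \<omega>)"
      using Z_L2 integrable_partial_sum_square by (intro integrable_mult_of_square_integrable) simp_all
    show "partial_sum N \<omega> \<bullet> Y \<omega> \<le> norm (partial_sum N \<omega>) * Z \<omega>" for \<omega>
      by (rule order_trans[OF norm_cauchy_schwarz mult_left_mono[OF norm_Y_le norm_ge_zero]])
  qed
  finally show ?thesis .
qed

lemma integral_running_max_increment_le:
  assumes "Suc j \<le> N"
  shows "(\<integral>\<omega>. norm (partial_sum (Suc j) \<omega>) * (running_max (Suc j) \<omega> - running_max j \<omega>) \<partial>M)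
    \<le> (\<integral>\<omega>. norm (partial_sum N \<omega>) * (running_max (Suc j) \<omega> - running_max j \<omega>) \<partial>M)"
proof (rule integral_norm_partial_sum_mult_le[OF _ _ _ assms])
  show "(\<lambda>\<omega>. running_max (Suc j) \<omega> - running_max j \<omega>) \<in> borel_measurable (F (Suc j))"
    using running_max_measurable_F measurable_F_mono[OF running_max_measurable_F[of j]] by measurable
  show "integrable M (\<lambda>\<omega>. (running_max (Suc j) \<omega> - running_max j \<omega>)\<^sup>2)"
  proof (rule Bochner_Integration.integrable_bound[OF integrable_running_max_square[of "Suc j"]])
    show "AE \<omega> in M. norm ((running_max (Suc j) \<omega> - running_max j \<omega>)\<^sup>2) \<le> norm ((running_max (Suc j) \<omega>)\<^sup>2)"
      using running_max_nonneg by (auto simp: running_max_Suc intro!: power_mono)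
  qed simp
qed (simp add: running_max_Suc)

lemma integrable_norm_partial_sum_mult_running_max:
  "integrable M (\<lambda>\<omega>. norm (partial_sum m \<omega>) * running_max l \<omega>)"
  using integrable_running_max_square integrable_partial_sum_square
  by (intro integrable_mult_of_square_integrable) simp_all

lemma integral_running_max_square_le:
  assumes "j \<le> N"
  shows "(\<integral>\<omega>. (running_max j \<omega>)\<^sup>2 \<partial>M) \<le> 2 * (\<integral>\<omega>. norm (partial_sum N \<omega>) * running_max j \<omega> \<partial>M)"
  using assms
proof (induction j)
  case (Suc j)
  define Z where "Z \<omega> = running_max (Suc j) \<omega> - running_max j \<omega>" for \<omega>
  have int_Z: "integrable M (\<lambda>\<omega>. norm (partial_sum m \<omega>) * Z \<omega>)" for m
    unfolding Z_def right_diff_distrib using integrable_norm_partial_sum_mult_running_max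
    by (intro Bochner_Integration.integrable_diff)
  have "(running_max (Suc j) \<omega>)\<^sup>2 \<le> (running_max j \<omega>)\<^sup>2 + 2 * (norm (partial_sum (Suc j) \<omega>) * Z \<omega>)" for \<omega>
    using max_square_le[of "running_max j \<omega>" "norm (partial_sum (Suc j) \<omega>)"]
    by (simp add: Z_def running_max_Suc mult.assoc)
  then have "(\<integral>\<omega>. (running_max (Suc j) \<omega>)\<^sup>2 \<partial>M)
      \<le> (\<integral>\<omega>. (running_max j \<omega>)\<^sup>2 + 2 * (norm (partial_sum (Suc j) \<omega>) * Z \<omega>) \<partial>M)"
    using integrable_running_max_square int_Z by (intro integral_mono) simp_all
  also have "\<dots> = (\<integral>\<omega>. (running_max j \<omega>)\<^sup>2 \<partial>M) + 2 * (\<integral>\<omega>. norm (partial_sum (Suc j) \<omega>) * Z \<omega> \<partial>M)"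
    using integrable_running_max_square int_Z by simp
  also have "\<dots> \<le> 2 * (\<integral>\<omega>. norm (partial_sum N \<omega>) * running_max j \<omega> \<partial>M)
      + 2 * (\<integral>\<omega>. norm (partial_sum N \<omega>) * Z \<omega> \<partial>M)"
    using Suc integral_running_max_increment_le[of j N] by (simp add: Z_def)
  also have "\<dots> = 2 * (\<integral>\<omega>. norm (partial_sum N \<omega>) * running_max (Suc j) \<omega> \<partial>M)"
    using integrable_norm_partial_sum_mult_running_max by (simp add: Z_def right_diff_distrib)
  finally show ?case .
qed simp

theorem doob_maximal_L2:
  "(\<integral>\<omega>. (running_max N \<omega>)\<^sup>2 \<partial>M) \<le> 4 * (\<Sum>i<N. \<integral>\<omega>. (norm (d i \<omega>))\<^sup>2 \<partial>M)"
proof -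
  have "(\<integral>\<omega>. (running_max N \<omega>)\<^sup>2 \<partial>M) \<le> (\<integral>\<omega>. 2 * (norm (partial_sum N \<omega>) * running_max N \<omega>) \<partial>M)"
    using integral_running_max_square_le[of N N] by simp
  also have "\<dots> \<le> (\<integral>\<omega>. (running_max N \<omega>)\<^sup>2 / 2 + 2 * (norm (partial_sum N \<omega>))\<^sup>2 \<partial>M)"
  proof (rule integral_mono)
    show "integrable M (\<lambda>\<omega>. 2 * (norm (partial_sum N \<omega>) * running_max N \<omega>))"
      using integrable_norm_partial_sum_mult_running_max by simp
    show "2 * (norm (partial_sum N \<omega>) * running_max N \<omega>) \<le> (running_max N \<omega>)\<^sup>2 / 2 + 2 * (norm (partial_sum N \<omega>))\<^sup>2" for \<omega>
    proof -
      have "0 \<le> (running_max N \<omega> - 2 * norm (partial_sum N \<omega>))\<^sup>2" by simp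
      then show ?thesis by (simp add: power2_eq_square algebra_simps)
    qed
  qed (use integrable_running_max_square integrable_partial_sum_square in simp)
  also have "\<dots> = (\<integral>\<omega>. (running_max N \<omega>)\<^sup>2 \<partial>M) / 2 + 2 * (\<integral>\<omega>. (norm (partial_sum N \<omega>))\<^sup>2 \<partial>M)"
    using integrable_running_max_square integrable_partial_sum_square by simp
  finally show ?thesis
    by (simp add: integral_partial_sum_square)
qed

lemma orthogonal_increments_shift:
  "orthogonal_increments M (\<lambda>i. F (a + i)) (\<lambda>i. d (a + i))"
  by unfold_locales (auto simp: space_F sets_F_mono subalgebra_F square_integrable orthogonal
      adapted[of "a + _", simplified])

lemma doob_maximal_L2_block:
  assumes "a < b"
  shows "integrable M (\<lambda>\<omega>. (Max ((\<lambda>j. norm (\<Sum>i\<in>{a..<j}. d i \<omega>)) ` {a<..b}))\<^sup>2)" (is ?int)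
    and "(\<integral>\<omega>. (Max ((\<lambda>j. norm (\<Sum>i\<in>{a..<j}. d i \<omega>)) ` {a<..b}))\<^sup>2 \<partial>M)
      \<le> 4 * (\<Sum>i\<in>{a..<b}. \<integral>\<omega>. (norm (d i \<omega>))\<^sup>2 \<partial>M)" (is ?le)
proof -
  interpret shifted: orthogonal_increments M "\<lambda>i. F (a + i)" "\<lambda>i. d (a + i)"
    by (rule orthogonal_increments_shift)
  define R where "R \<omega> = Max ((\<lambda>j. norm (\<Sum>i\<in>{a..<j}. d i \<omega>)) ` {a<..b})" for \<omega>
  have sum_shift: "(\<Sum>i\<in>{a..<a + l}. d i \<omega>) = shifted.partial_sum l \<omega>" for l \<omega>
    unfolding shifted.partial_sum_def
    using sum.atLeastLessThan_shift_bounds[of "\<lambda>i. d i \<omega>" 0 a l]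
    by (simp add: atLeast0LessThan add.commute comp_def)
  have R_nonneg: "0 \<le> R \<omega>" for \<omega>
    unfolding R_def using \<open>a < b\<close> by (intro order_trans[OF norm_ge_zero Max_ge]) auto
  have R_le: "R \<omega> \<le> shifted.running_max (b - a) \<omega>" for \<omega>
    unfolding R_def
  proof (rule Max.boundedI)
    show "finite ((\<lambda>j. norm (\<Sum>i\<in>{a..<j}. d i \<omega>)) ` {a<..b})" by simp
    show "(\<lambda>j. norm (\<Sum>i\<in>{a..<j}. d i \<omega>)) ` {a<..b} \<noteq> {}" using \<open>a < b\<close> by simp
  next
    fix r assume "r \<in> (\<lambda>j. norm (\<Sum>i\<in>{a..<j}. d i \<omega>)) ` {a<..b}"
    then obtain j where "a < j" "j \<le> b" "r = norm (\<Sum>i\<in>{a..<a + (j - a)}. d i \<omega>)"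
      by auto
    then show "r \<le> shifted.running_max (b - a) \<omega>"
      unfolding sum_shift shifted.running_max_def by (intro Max_ge) auto
  qed
  have R_square_le: "(R \<omega>)\<^sup>2 \<le> (shifted.running_max (b - a) \<omega>)\<^sup>2" for \<omega>
    by (rule power_mono[OF R_le R_nonneg])
  have int: "integrable M (\<lambda>\<omega>. (R \<omega>)\<^sup>2)"
  proof (rule Bochner_Integration.integrable_bound[OF shifted.integrable_running_max_square])
    show "AE \<omega> in M. norm ((R \<omega>)\<^sup>2) \<le> norm ((shifted.running_max (b - a) \<omega>)\<^sup>2)"
      using R_square_le by simp
  qed (simp add: R_def)
  then show ?int by (simp add: R_def)
  have "(\<integral>\<omega>. (R \<omega>)\<^sup>2 \<partial>M) \<le> (\<integral>\<omega>. (shifted.running_max (b - a) \<omega>)\<^sup>2 \<partial>M)"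
    by (intro integral_mono int shifted.integrable_running_max_square R_square_le)
  also have "\<dots> \<le> 4 * (\<Sum>i<b - a. \<integral>\<omega>. (norm (d (a + i) \<omega>))\<^sup>2 \<partial>M)"
    by (rule shifted.doob_maximal_L2)
  also have "\<dots> = 4 * (\<Sum>i\<in>{a..<b}. \<integral>\<omega>. (norm (d i \<omega>))\<^sup>2 \<partial>M)"
    using sum.atLeastLessThan_shift_bounds[of "\<lambda>i. \<integral>\<omega>. (norm (d i \<omega>))\<^sup>2 \<partial>M" 0 a "b - a"] \<open>a < b\<close>
    by (simp add: atLeast0LessThan add.commute comp_def)
  finally show ?le by (simp add: R_def)
qed

lemma AE_summable_weighted_block_max:
  fixes \<beta> :: "nat \<Rightarrow> real"
  assumes "strict_mono n" and \<beta>_nonneg: "\<And>k. 0 \<le> \<beta> k"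
    and "eventually (\<lambda>k. \<beta> k \<le> \<beta> (Suc k)) sequentially"
    and summable: "summable (\<lambda>i. (\<beta> i)\<^sup>2 * (\<integral>\<omega>. (norm (d i \<omega>))\<^sup>2 \<partial>M))"
  shows "AE \<omega> in M. summable (\<lambda>k. (\<beta> (n k))\<^sup>2 *
    (Max ((\<lambda>j. norm (\<Sum>i\<in>{n k..<j}. d i \<omega>)) ` {n k<..n (Suc k)}))\<^sup>2)"
proof -
  define R where "R k \<omega> = Max ((\<lambda>j. norm (\<Sum>i\<in>{n k..<j}. d i \<omega>)) ` {n k<..n (Suc k)})" for k \<omega>
  define B where "B k = (\<Sum>i\<in>{n k..<n (Suc k)}. (\<beta> i)\<^sup>2 * (\<integral>\<omega>. (norm (d i \<omega>))\<^sup>2 \<partial>M))" for k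
  have block: "n k < n (Suc k)" for k
    using \<open>strict_mono n\<close> by (simp add: strict_mono_Suc_iff)
  obtain K where K: "\<And>k. K \<le> k \<Longrightarrow> \<beta> k \<le> \<beta> (Suc k)"
    using assms(3) by (auto simp: eventually_sequentially)
  have \<beta>_mono: "\<beta> i \<le> \<beta> j" if "K \<le> i" "i \<le> j" for i j
    by (rule lift_Suc_mono_le_ivl[where N="{K..}"]) (use K that in auto)
  have int: "integrable M (\<lambda>\<omega>. (\<beta> (n k))\<^sup>2 * (R k \<omega>)\<^sup>2)" for k
    using doob_maximal_L2_block(1)[OF block] by (simp add: R_def)
  have bound: "(\<integral>\<omega>. (\<beta> (n k))\<^sup>2 * (R k \<omega>)\<^sup>2 \<partial>M) \<le> 4 * B k" if "K \<le> k" for k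
  proof -
    have "(\<integral>\<omega>. (\<beta> (n k))\<^sup>2 * (R k \<omega>)\<^sup>2 \<partial>M) = (\<beta> (n k))\<^sup>2 * (\<integral>\<omega>. (R k \<omega>)\<^sup>2 \<partial>M)"
      by simp
    also have "\<dots> \<le> (\<beta> (n k))\<^sup>2 * (4 * (\<Sum>i\<in>{n k..<n (Suc k)}. \<integral>\<omega>. (norm (d i \<omega>))\<^sup>2 \<partial>M))"
      using doob_maximal_L2_block(2)[OF block] by (intro mult_left_mono) (simp_all add: R_def)
    also have "\<dots> \<le> 4 * B k"
      unfolding B_def sum_distrib_left mult.left_commute[of "(\<beta> (n k))\<^sup>2"]
    proof (intro mult_left_mono sum_mono mult_right_mono)
      fix i assume "i \<in> {n k..<n (Suc k)}"
      moreover have "K \<le> n k"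
        using \<open>K \<le> k\<close> seq_suble[OF \<open>strict_mono n\<close>, of k] by simp
      ultimately show "(\<beta> (n k))\<^sup>2 \<le> (\<beta> i)\<^sup>2"
        using \<beta>_nonneg by (intro power_mono \<beta>_mono) auto
    qed simp_all
    finally show ?thesis .
  qed
  have "summable (\<lambda>k. 4 * B k)"
    unfolding B_def by (intro summable_mult summable_sum_blocks[OF summable _ \<open>strict_mono n\<close>]) simp
  then have "summable (\<lambda>k. \<integral>\<omega>. (\<beta> (n k))\<^sup>2 * (R k \<omega>)\<^sup>2 \<partial>M)"
  proof (rule summable_comparison_test')
    show "norm (\<integral>\<omega>. (\<beta> (n k))\<^sup>2 * (R k \<omega>)\<^sup>2 \<partial>M) \<le> 4 * B k" if "K \<le> k" for k
      using bound[OF that] by (simp add: integral_nonneg)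
  qed
  then have "AE \<omega> in M. summable (\<lambda>k. (\<beta> (n k))\<^sup>2 * (R k \<omega>)\<^sup>2)"
    using int by (intro AE_summable_of_summable_integral) simp_all
  then show ?thesis by (simp add: R_def)
qed

end

definition vector_cond_exp :: "'a measure \<Rightarrow> 'a measure \<Rightarrow> ('a \<Rightarrow> 'd::euclidean_space) \<Rightarrow> 'a \<Rightarrow> 'd" where
  "vector_cond_exp M F X \<omega> = (\<Sum>b\<in>Basis. real_cond_exp M F (\<lambda>\<omega>. X \<omega> \<bullet> b) \<omega> *\<^sub>R b)"

lemma borel_measurable_vector_cond_exp [measurable]: "vector_cond_exp M F X \<in> borel_measurable F"
  unfolding vector_cond_exp_def by measurable

lemma inner_vector_cond_exp_Basis:
  "b \<in> Basis \<Longrightarrow> vector_cond_exp M F X \<omega> \<bullet> b = real_cond_exp M F (\<lambda>\<omega>. X \<omega> \<bullet> b) \<omega>"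
  by (simp add: vector_cond_exp_def inner_sum_left inner_Basis if_distrib cong: if_cong)

lemma AE_vector_cond_exp_eqI:
  assumes "\<And>b. b \<in> Basis \<Longrightarrow> AE \<omega> in M. real_cond_exp M F (\<lambda>\<omega>. X \<omega> \<bullet> b) \<omega> = Y \<omega> \<bullet> b"
  shows "AE \<omega> in M. vector_cond_exp M F X \<omega> = Y \<omega>"
proof -
  have "AE \<omega> in M. \<forall>b\<in>Basis. real_cond_exp M F (\<lambda>\<omega>. X \<omega> \<bullet> b) \<omega> = Y \<omega> \<bullet> b"
    using assms by (intro AE_finite_allI) simp_all
  then show ?thesis
    by eventually_elim (simp add: euclidean_eq_iff[where y="Y _"] inner_vector_cond_exp_Basis)
qed

lemma (in sigma_finite_subalgebra) integral_inner_sub_vector_cond_exp_eq_0: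
  fixes X Y :: "'a \<Rightarrow> 'd::euclidean_space"
  assumes X: "integrable M X" and Y_F: "Y \<in> borel_measurable F"
    and int: "integrable M (\<lambda>\<omega>. norm (X \<omega> - vector_cond_exp M F X \<omega>) * norm (Y \<omega>))"
  shows "(\<integral>\<omega>. (X \<omega> - vector_cond_exp M F X \<omega>) \<bullet> Y \<omega> \<partial>M) = 0"
proof -
  define E where "E \<omega> = X \<omega> - vector_cond_exp M F X \<omega>" for \<omega>
  have [measurable]: "Y \<in> borel_measurable M" by (rule measurable_from_subalg[OF subalg Y_F])
  have [measurable]: "X \<in> borel_measurable M" using X by (rule borel_measurable_integrable)
  have [measurable]: "vector_cond_exp M F X \<in> borel_measurable M"
    by (rule measurable_from_subalg[OF subalg borel_measurable_vector_cond_exp])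
  have int_b: "integrable M (\<lambda>\<omega>. (Y \<omega> \<bullet> b) * (E \<omega> \<bullet> b))" if b: "b \<in> Basis" for b
  proof (rule Bochner_Integration.integrable_bound[OF int])
    show "AE \<omega> in M. norm ((Y \<omega> \<bullet> b) * (E \<omega> \<bullet> b)) \<le> norm (norm (X \<omega> - vector_cond_exp M F X \<omega>) * norm (Y \<omega>))"
      using b by (intro AE_I2) (simp add: E_def abs_mult mult.commute mult_mono Basis_le_norm)
  qed (simp add: E_def)
  have zero_b: "(\<integral>\<omega>. (Y \<omega> \<bullet> b) * (E \<omega> \<bullet> b) \<partial>M) = 0" if b: "b \<in> Basis" for b
  proof -
    have X_b: "integrable M (\<lambda>\<omega>. X \<omega> \<bullet> b)" using X by simp
    have "AE \<omega> in M. real_cond_exp M F (\<lambda>\<omega>. E \<omega> \<bullet> b) \<omega> = 0"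
      using real_cond_exp_diff[OF X_b real_cond_exp_int(1)[OF X_b]]
        real_cond_exp_F_meas[OF real_cond_exp_int(1)[OF X_b] borel_measurable_cond_exp]
      by eventually_elim (simp add: E_def inner_diff_left inner_vector_cond_exp_Basis b)
    then have "(\<integral>\<omega>. (Y \<omega> \<bullet> b) * real_cond_exp M F (\<lambda>\<omega>. E \<omega> \<bullet> b) \<omega> \<partial>M) = 0"
      by (subst integral_cong_AE[where g="\<lambda>_. 0"]) (auto elim: AE_mp)
    moreover have "(\<lambda>\<omega>. Y \<omega> \<bullet> b) \<in> borel_measurable F" "(\<lambda>\<omega>. E \<omega> \<bullet> b) \<in> borel_measurable M"
      using Y_F unfolding E_def by measurable
    ultimately show ?thesis
      using real_cond_exp_intg(2)[OF int_b[OF b]] by simp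
  qed
  have "(\<integral>\<omega>. E \<omega> \<bullet> Y \<omega> \<partial>M) = (\<integral>\<omega>. (\<Sum>b\<in>Basis. (Y \<omega> \<bullet> b) * (E \<omega> \<bullet> b)) \<partial>M)"
    by (subst euclidean_inner) (simp add: mult.commute)
  also have "\<dots> = (\<Sum>b\<in>Basis. \<integral>\<omega>. (Y \<omega> \<bullet> b) * (E \<omega> \<bullet> b) \<partial>M)"
    by (rule Bochner_Integration.integral_sum) (rule int_b)
  also have "\<dots> = 0"
    by (simp add: zero_b)
  finally show ?thesis
    by (simp add: E_def)
qed

lemma (in finite_measure) orthogonal_increments_scaled_centered:
  fixes g :: "nat \<Rightarrow> 'a \<Rightarrow> 'd::euclidean_space" and \<alpha> :: "nat \<Rightarrow> real"
  assumes "filtration (space M) F" and subalg: "\<And>k. subalgebra M (F k)"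
    and adapted: "\<And>k. g k \<in> borel_measurable (F (Suc k))" and int: "\<And>k. integrable M (g k)"
    and L2: "\<And>k. integrable M (\<lambda>\<omega>. (norm (g k \<omega> - vector_cond_exp M (F k) (g k) \<omega>))\<^sup>2)"
  shows "orthogonal_increments M F (\<lambda>k \<omega>. \<alpha> k *\<^sub>R (g k \<omega> - vector_cond_exp M (F k) (g k) \<omega>))"
proof -
  interpret filtration "space M" F by fact
  have [measurable]: "g k \<in> borel_measurable M" for k
    by (rule measurable_from_subalg[OF subalg adapted])
  have [measurable]: "vector_cond_exp M (F k) (g k) \<in> borel_measurable M" for k
    by (rule measurable_from_subalg[OF subalg borel_measurable_vector_cond_exp])
  show ?thesis
  proof unfold_locales
    fix k
    have "vector_cond_exp M (F k) (g k) \<in> borel_measurable (F (Suc k))"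
      by (rule measurable_F_mono[OF borel_measurable_vector_cond_exp]) simp
    with adapted[of k]
    show "(\<lambda>\<omega>. \<alpha> k *\<^sub>R (g k \<omega> - vector_cond_exp M (F k) (g k) \<omega>)) \<in> borel_measurable (F (Suc k))"
      by measurable
    show "integrable M (\<lambda>\<omega>. (norm (\<alpha> k *\<^sub>R (g k \<omega> - vector_cond_exp M (F k) (g k) \<omega>)))\<^sup>2)"
      using L2[of k] by (simp add: power_mult_distrib)
  next
    fix k and Y :: "'a \<Rightarrow> 'd"
    assume Y_F: "Y \<in> borel_measurable (F k)" and Y_L2: "integrable M (\<lambda>\<omega>. (norm (Y \<omega>))\<^sup>2)"
    interpret sigma_finite_subalgebra M "F k"
      using subalg by (intro finite_measure_subalgebra_is_sigma_finite)
        (simp add: finite_measure_subalgebra_def finite_measure_subalgebra_axioms_def finite_measure_axioms)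
    have [measurable]: "Y \<in> borel_measurable M" by (rule measurable_from_subalg[OF subalg Y_F])
    have "integrable M (\<lambda>\<omega>. norm (g k \<omega> - vector_cond_exp M (F k) (g k) \<omega>) * norm (Y \<omega>))"
      using L2 Y_L2 by (intro integrable_mult_of_square_integrable) simp_all
    then show "(\<integral>\<omega>. \<alpha> k *\<^sub>R (g k \<omega> - vector_cond_exp M (F k) (g k) \<omega>) \<bullet> Y \<omega> \<partial>M) = 0"
      using integral_inner_sub_vector_cond_exp_eq_0[OF int Y_F] by simp
  qed (use subalg in simp)
qed

text \<open>The conditional mean \<open>G k\<close> need not be measurable (in the application it is \<open>gradf \<circ> x k\<close>),
  so the noise \<open>g k - G k\<close> is handled through the almost everywhere equal, measurable
  \<open>g k - vector_cond_exp M (F k) (g k)\<close>.\<close>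

lemma (in finite_measure) AE_summable_weighted_block_max_noise:
  fixes g G :: "nat \<Rightarrow> 'a \<Rightarrow> 'd::euclidean_space" and \<alpha> \<beta> \<sigma> :: "nat \<Rightarrow> real"
  assumes filt: "filtration (space M) F" "\<And>k. subalgebra M (F k)"
    and g_meas: "\<And>k. g k \<in> borel_measurable (F (Suc k))" and g_int: "\<And>k. integrable M (g k)"
    and unbiased: "\<And>k b. b \<in> Basis \<Longrightarrow>
      AE \<omega> in M. real_cond_exp M (F k) (\<lambda>\<omega>. g k \<omega> \<bullet> b) \<omega> = G k \<omega> \<bullet> b"
    and variance: "\<And>k. (\<integral>\<^sup>+\<omega>. ennreal ((norm (g k \<omega> - G k \<omega>))\<^sup>2) \<partial>M) \<le> ennreal ((\<sigma> k)\<^sup>2)"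
    and "strict_mono n" "\<And>k. 0 \<le> \<beta> k" "eventually (\<lambda>k. \<beta> k \<le> \<beta> (Suc k)) sequentially"
    and summable: "summable (\<lambda>k. (\<alpha> k)\<^sup>2 * (\<beta> k)\<^sup>2 * (\<sigma> k)\<^sup>2)"
  shows "AE \<omega> in M. summable (\<lambda>k. (\<beta> (n k))\<^sup>2 *
    (Max ((\<lambda>j. norm (\<Sum>i\<in>{n k..<j}. \<alpha> i *\<^sub>R (g i \<omega> - G i \<omega>))) ` {n k<..n (Suc k)}))\<^sup>2)"
proof -
  define e where "e k \<omega> = g k \<omega> - vector_cond_exp M (F k) (g k) \<omega>" for k \<omega>
  have "AE \<omega> in M. vector_cond_exp M (F k) (g k) \<omega> = G k \<omega>" for k
    using unbiased by (rule AE_vector_cond_exp_eqI)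
  then have e_eq: "AE \<omega> in M. \<forall>k. e k \<omega> = g k \<omega> - G k \<omega>"
    unfolding AE_all_countable e_def by (auto elim: AE_mp)
  have [measurable]: "e k \<in> borel_measurable M" for k
    using measurable_from_subalg[OF filt(2) g_meas]
      measurable_from_subalg[OF filt(2) borel_measurable_vector_cond_exp]
    unfolding e_def by measurable
  have e_nn_integral: "(\<integral>\<^sup>+\<omega>. ennreal ((norm (e k \<omega>))\<^sup>2) \<partial>M) \<le> ennreal ((\<sigma> k)\<^sup>2)" for k
  proof -
    have "(\<integral>\<^sup>+\<omega>. ennreal ((norm (e k \<omega>))\<^sup>2) \<partial>M) = (\<integral>\<^sup>+\<omega>. ennreal ((norm (g k \<omega> - G k \<omega>))\<^sup>2) \<partial>M)"
      using e_eq by (intro nn_integral_cong_AE) (auto elim: AE_mp)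
    then show ?thesis using variance by simp
  qed
  have e_L2: "integrable M (\<lambda>\<omega>. (norm (e k \<omega>))\<^sup>2)" for k
    by (rule nn_integral_le_imp_integrable[OF _ _ e_nn_integral]) simp_all
  have e_var: "(\<integral>\<omega>. (norm (e k \<omega>))\<^sup>2 \<partial>M) \<le> (\<sigma> k)\<^sup>2" for k
    by (rule nn_integral_le_imp_integral_le[OF _ _ e_nn_integral]) simp_all
  interpret noise: orthogonal_increments M F "\<lambda>k \<omega>. \<alpha> k *\<^sub>R e k \<omega>"
    unfolding e_def using filt g_meas g_int e_L2[unfolded e_def]
    by (rule orthogonal_increments_scaled_centered)
  have "summable (\<lambda>i. (\<beta> i)\<^sup>2 * (\<integral>\<omega>. (norm (\<alpha> i *\<^sub>R e i \<omega>))\<^sup>2 \<partial>M))"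
  proof (rule summable_comparison_test'[OF summable])
    fix i
    have "(\<beta> i)\<^sup>2 * (\<integral>\<omega>. (norm (\<alpha> i *\<^sub>R e i \<omega>))\<^sup>2 \<partial>M) = (\<alpha> i)\<^sup>2 * (\<beta> i)\<^sup>2 * (\<integral>\<omega>. (norm (e i \<omega>))\<^sup>2 \<partial>M)"
      by (simp add: power_mult_distrib)
    also have "\<dots> \<le> (\<alpha> i)\<^sup>2 * (\<beta> i)\<^sup>2 * (\<sigma> i)\<^sup>2"
      by (intro mult_left_mono e_var) simp
    finally show "norm ((\<beta> i)\<^sup>2 * (\<integral>\<omega>. (norm (\<alpha> i *\<^sub>R e i \<omega>))\<^sup>2 \<partial>M)) \<le> (\<alpha> i)\<^sup>2 * (\<beta> i)\<^sup>2 * (\<sigma> i)\<^sup>2"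
      by (simp add: integral_nonneg)
  qed
  then have "AE \<omega> in M. summable (\<lambda>k. (\<beta> (n k))\<^sup>2 *
      (Max ((\<lambda>j. norm (\<Sum>i\<in>{n k..<j}. \<alpha> i *\<^sub>R e i \<omega>)) ` {n k<..n (Suc k)}))\<^sup>2)"
    using assms(7-9) by (rule noise.AE_summable_weighted_block_max[rotated 3])
  then show ?thesis
    using e_eq by eventually_elim simp
qed

theorem lemma2p6:
  fixes \<phi> :: "'d::euclidean_space \<Rightarrow> ereal"
    and f :: "'d \<Rightarrow> real" and gradf :: "'d \<Rightarrow> 'd"
    and M :: "'w measure" and F :: "nat \<Rightarrow> 'w measure"
    and lam :: real and \<alpha> \<sigma> \<beta> :: "nat \<Rightarrow> real" and z0 :: 'd
    and g x z :: "nat \<Rightarrow> 'w \<Rightarrow> 'd"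
    and n :: "nat \<Rightarrow> nat"
  assumes phi: "econvex \<phi>" "elsc \<phi>" "proper_fun \<phi>"
    and f_C1: "\<exists>U. open U \<and> edom \<phi> \<subseteq> U \<and> continuous_on U gradf \<and>
                 (\<forall>y\<in>U. (f has_derivative (\<lambda>h. gradf y \<bullet> h)) (at y))"
    and prob: "prob_space M"
    and filt: "filtration (space M) F" "\<And>k. subalgebra M (F k)"
    and lam: "lam > 0"
    and alpha_pos: "\<And>k. \<alpha> k > 0"
    and g_meas: "\<And>k. g k \<in> borel_measurable (F (Suc k))"
    and z_0: "\<And>\<omega>. z 0 \<omega> = z0"
    and x_def: "\<And>k \<omega>. x k \<omega> = prox lam \<phi> (z k \<omega>)"
    and z_Suc: "\<And>k \<omega>. z (Suc k) \<omega> = z k \<omega> - \<alpha> k *\<^sub>R (g k \<omega> + grad_env lam \<phi> (z k \<omega>))"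
    and A2_int: "\<And>k. integrable M (g k)"
    and A2_condexp: "\<And>k b. b \<in> Basis \<Longrightarrow>
        AE \<omega> in M. real_cond_exp M (F k) (\<lambda>\<omega>. g k \<omega> \<bullet> b) \<omega> = gradf (x k \<omega>) \<bullet> b"
    and A2_sigma: "\<And>k. \<sigma> k \<ge> 0"
    and A2_var: "\<And>k. (\<integral>\<^sup>+ \<omega>. ennreal ((norm (g k \<omega> - gradf (x k \<omega>)))\<^sup>2) \<partial>M) \<le> ennreal ((\<sigma> k)\<^sup>2)"
    and A3: "filterlim (\<lambda>m. \<Sum>k<m. \<alpha> k) at_top sequentially" "\<alpha> \<longlonglongrightarrow> 0"
    and A4: "\<And>k. \<beta> k > 0" "\<exists>K. \<forall>k\<ge>K. \<beta> k \<le> \<beta> (Suc k)"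
        "summable (\<lambda>k. (\<alpha> k)\<^sup>2 * (\<beta> k)\<^sup>2 * (\<sigma> k)\<^sup>2)"
    and n_mono: "strict_mono n"
  shows "AE \<omega> in M. summable (\<lambda>k. (\<beta> (n k))\<^sup>2 *
           (Max ((\<lambda>j. norm (\<Sum>i\<in>{n k..<j}. \<alpha> i *\<^sub>R (g i \<omega> - gradf (x i \<omega>))))
                  ` {n k<..n (Suc k)}))\<^sup>2)"
proof -
  interpret prob_space M by (rule prob)
  have "eventually (\<lambda>k. \<beta> k \<le> \<beta> (Suc k)) sequentially"
    using A4(2) by (simp add: eventually_sequentially)
  with filt g_meas A2_int A2_condexp A2_var n_mono A4(1) A4(3) show ?thesis
    by (intro AE_summable_weighted_block_max_noise[where G="\<lambda>k \<omega>. gradf (x k \<omega>)"])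
      (auto intro: less_imp_le)
qed

end
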